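(* Assume $|\Theta|>1$ and let $D^{ST}$ be any constant with $d^{\mathcal T}(\theta,\theta^{\mathcal T}_* )\le d^{\mathcal S}(\theta,\theta^{\mathcal S}_* )+D^{ST}$ for all $\theta\in\Theta$. With $\hat\theta\in\arg\min_{\theta}\min_M\widehat{\mathcal R}^{\mathcal S}_{\theta,M}$ and $\Delta\mathcal R^{\mathcal S\to\mathcal T}=\mathcal R^{\mathcal T}_{\hat\theta,\widehat M^{\mathcal T}_{\hat\theta}}-\min_\theta\mathcal R^{\mathcal T}_\theta$, for every realization of the data sets, $$\Delta\mathcal R^{\mathcal S\to\mathcal T}\le2\mathcal G^{\mathcal T}_{\hat\theta}(\mathcal D^{\mathcal T})+d^{\mathcal S}(\hat\theta,\theta^{\mathcal S}_* )+D^{ST}\le2\mathcal G^{\mathcal T}_{\hat\theta}(\mathcal D^{\mathcal T})+\sup_{\theta\in\Theta}\mathcal G^{\mathcal S}_\theta(\mathcal D^{\mathcal S})+\mathcal G^{\mathcal S}_{\theta^{\mathcal S}_*}(\mathcal D^{\mathcal S})+D^{ST}.$$ If instead $\Theta=\{\theta\}$ is a singleton, then $\Delta\mathcal R^{\mathcal S\to\mathcal T}\le2\mathcal G^{\mathcal T}_\theta(\mathcal D^{\mathcal T})$.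
   Context: $\mathcal X$ finite, labels $c\in\{0,1\}$, $\Theta$ arbitrary, $\rho_\theta(x)$ density matrices on $\mathbb C^n$, $\mathcal M$ the binary POVMs $M=(M_0,M_1)$, $M_c\succeq0$, $M_0+M_1=I$; loss $\ell_{\theta,M}(c,x)=1-\mathrm{Tr}(M_c\rho_\theta(x))$. For task $\mathcal A\in\{\mathcal S,\mathcal T\}$ with distribution $p^{\mathcal A}(c,x)$ and finite data set $\mathcal D^{\mathcal A}$ of $N^{\mathcal A}$ samples: $\mathcal R^{\mathcal A}_{\theta,M}=\mathbb E_{p^{\mathcal A}}[\ell_{\theta,M}]$, $\mathcal R^{\mathcal A}_\theta=\min_M\mathcal R^{\mathcal A}_{\theta,M}$, $\widehat{\mathcal R}^{\mathcal A}_{\theta,M}=\frac1{N^{\mathcal A}}\sum_{(c,x)\in\mathcal D^{\mathcal A}}\ell_{\theta,M}(c,x)$, $\widehat M^{\mathcal A}_\theta\in\arg\min_M\widehat{\mathcal R}^{\mathcal A}_{\theta,M}$, $\theta^{\mathcal A}_*\in\arg\min_\theta\mathcal R^{\mathcal A}_\theta$ (minimizers assumed to exist). Task distance $d^{\mathcal A}(\theta,\theta')=|\mathcal R^{\mathcal A}_{\theta'}-\mathcal R^{\mathcal A}_\theta|$. Generalization error $\mathcal G^{\mathcal A}_\theta(\mathcal D^{\mathcal A})=\sup_{M\in\mathcal M}|\mathcal R^{\mathcal A}_{\theta,M}-\widehat{\mathcal R}^{\mathcal A}_{\theta,M}|$. *)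

theory Defs
  imports "HOL-Analysis.Analysis" "HOL-Probability.Probability_Mass_Function"
begin

text \<open>Complex n x n matrices are represented as complex^'n^'n for a finite index type 'n.
  Labels c in {0,1} are represented by bool (False = 0, True = 1).\<close>

definition hermitian :: "complex^'n^'n \<Rightarrow> bool" where
  "hermitian A \<longleftrightarrow> (\<forall>i j. A$i$j = cnj (A$j$i))"

definition psd :: "complex^'n^'n \<Rightarrow> bool" where
  "psd A \<longleftrightarrow> hermitian A \<and>
     (\<forall>v::complex^'n. 0 \<le> Re (\<Sum>i\<in>UNIV. cnj (v$i) * (A *v v)$i))"

definition density :: "complex^'n^'n \<Rightarrow> bool" where
  "density A \<longleftrightarrow> psd A \<and> trace A = 1"

definition POVMs :: "(bool \<Rightarrow> complex^'n^'n) set" where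
  "POVMs = {M. psd (M False) \<and> psd (M True) \<and> M False + M True = mat 1}"

text \<open>loss l_{theta,M}(c,x) = 1 - Tr(M_c rho_theta(x)) (the trace is real here).\<close>
definition loss :: "('p \<Rightarrow> 'x \<Rightarrow> complex^'n^'n) \<Rightarrow> 'p \<Rightarrow> (bool \<Rightarrow> complex^'n^'n)
                     \<Rightarrow> bool \<times> 'x \<Rightarrow> real" where
  "loss \<rho> \<theta> M z = 1 - Re (trace (M (fst z) ** \<rho> \<theta> (snd z)))"

definition risk :: "(bool \<times> 'x::finite) pmf \<Rightarrow> ('p \<Rightarrow> 'x \<Rightarrow> complex^'n^'n) \<Rightarrow> 'p
                     \<Rightarrow> (bool \<Rightarrow> complex^'n^'n) \<Rightarrow> real" where
  "risk p \<rho> \<theta> M = (\<Sum>z\<in>UNIV. pmf p z * loss \<rho> \<theta> M z)"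

definition risk_opt :: "(bool \<times> 'x::finite) pmf \<Rightarrow> ('p \<Rightarrow> 'x \<Rightarrow> complex^'n^'n) \<Rightarrow> 'p \<Rightarrow> real" where
  "risk_opt p \<rho> \<theta> = (INF M\<in>POVMs. risk p \<rho> \<theta> M)"

definition emp_risk :: "(bool \<times> 'x) list \<Rightarrow> ('p \<Rightarrow> 'x \<Rightarrow> complex^'n^'n) \<Rightarrow> 'p
                         \<Rightarrow> (bool \<Rightarrow> complex^'n^'n) \<Rightarrow> real" where
  "emp_risk D \<rho> \<theta> M = (\<Sum>z\<leftarrow>D. loss \<rho> \<theta> M z) / real (length D)"

definition task_dist :: "(bool \<times> 'x::finite) pmf \<Rightarrow> ('p \<Rightarrow> 'x \<Rightarrow> complex^'n^'n) \<Rightarrow> 'p \<Rightarrow> 'p \<Rightarrow> real" where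
  "task_dist p \<rho> \<theta> \<theta>' = \<bar>risk_opt p \<rho> \<theta>' - risk_opt p \<rho> \<theta>\<bar>"

definition gen_err :: "(bool \<times> 'x::finite) pmf \<Rightarrow> (bool \<times> 'x) list \<Rightarrow> ('p \<Rightarrow> 'x \<Rightarrow> complex^'n^'n)
                        \<Rightarrow> 'p \<Rightarrow> real" where
  "gen_err p D \<rho> \<theta> = (SUP M\<in>POVMs. \<bar>risk p \<rho> \<theta> M - emp_risk D \<rho> \<theta> M\<bar>)"

end

theory Submission
  imports Defs
begin

text \<open>For a fixed parameter, population and empirical risk differ by at most the generalization
  error G uniformly in the POVM, so their infima over the POVMs differ by at most G and the
  empirical minimiser is within 2G of the optimal risk. With the minimality of the target optimum
  and the task distance hypothesis this gives the first bound. For the second, the source task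
  distance of the empirical source minimiser is bounded by going from its population optimum to
  its empirical optimum, across to the empirical optimum at the source minimiser, and back to the
  population optimum there: one generalization error is paid at each of the two parameters.
  All these suprema and infima are finite because the loss is bounded: a positive semidefinite
  matrix whose diagonal entries are at most 1 has all entries of modulus at most 1.\<close>

lemma matrix_vector_mult_axis_nth:
  fixes A :: "'a::semiring_1^'n^'m"
  shows "(A *v axis j c) $ k = A $ k $ j * c"
  by (simp add: matrix_vector_mult_def axis_def if_distrib cong: if_cong)

lemma sum_cnj_axis_mult:
  "(\<Sum>k\<in>UNIV. cnj ((axis i c :: complex^'n) $ k) * f k) = cnj c * f i"
proof -
  have "(\<Sum>k\<in>UNIV. cnj ((axis i c :: complex^'n) $ k) * f k)
      = (\<Sum>k\<in>UNIV. if k = i then cnj c * f k else 0)"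
    by (rule sum.cong) (auto simp: axis_def)
  then show ?thesis
    by simp
qed

lemma psd_quadratic_form_nonneg:
  "psd A \<Longrightarrow> 0 \<le> Re (\<Sum>k\<in>UNIV. cnj (v $ k) * (A *v v) $ k)"
  unfolding psd_def by blast

lemma quadratic_form_axis_add_axis:
  fixes A :: "complex^'n^'n"
  assumes "i \<noteq> j"
  shows "(\<Sum>k\<in>UNIV. cnj ((axis i 1 + axis j z :: complex^'n) $ k)
                     * (A *v (axis i 1 + axis j z)) $ k)
     = A$i$i + A$i$j * z + cnj z * A$j$i + cnj z * z * A$j$j"
proof -
  have "(A *v (axis i 1 + axis j z)) $ k = A$k$i + A$k$j * z" for k
    by (simp add: matrix_vector_right_distrib matrix_vector_mult_axis_nth)
  then have "(\<Sum>k\<in>UNIV. cnj ((axis i 1 + axis j z :: complex^'n) $ k)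
                         * (A *v (axis i 1 + axis j z)) $ k)
      = (\<Sum>k\<in>UNIV. cnj ((axis i 1 :: complex^'n) $ k) * (A$k$i + A$k$j * z))
      + (\<Sum>k\<in>UNIV. cnj ((axis j z :: complex^'n) $ k) * (A$k$i + A$k$j * z))"
    by (simp add: distrib_right sum.distrib)
  then show ?thesis
    unfolding sum_cnj_axis_mult by (simp add: algebra_simps)
qed

lemma psd_diagonal:
  assumes "psd (A :: complex^'n^'n)"
  shows psd_diagonal_Re_nonneg: "0 \<le> Re (A$i$i)" and psd_diagonal_Im: "Im (A$i$i) = 0"
proof -
  have "0 \<le> Re (\<Sum>k\<in>UNIV. cnj ((axis i 1 :: complex^'n) $ k) * (A *v axis i 1) $ k)"
    using assms by (rule psd_quadratic_form_nonneg)
  then show "0 \<le> Re (A$i$i)"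
    by (simp add: sum_cnj_axis_mult matrix_vector_mult_axis_nth)
  have "A$i$i = cnj (A$i$i)"
    using assms unfolding psd_def hermitian_def by blast
  then show "Im (A$i$i) = 0"
    by (metis cnj.sel(2) equal_neg_zero)
qed

text \<open>Testing the quadratic form on e_i + z e_j with the unimodular z = - cnj a / \<bar>a\<bar>,
  where a = A_ij, turns the two cross terms into -2\<bar>a\<bar>.\<close>
lemma psd_off_diagonal_le:
  fixes A :: "complex^'n^'n"
  assumes psd: "psd A" and "i \<noteq> j"
  shows "2 * cmod (A$i$j) \<le> Re (A$i$i) + Re (A$j$j)"
proof (cases "A$i$j = 0")
  case True
  then show ?thesis
    using psd_diagonal_Re_nonneg[OF psd] by (simp add: add_nonneg_nonneg)
next
  case False
  define a where "a = A$i$j"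
  define z where "z = - cnj a / complex_of_real (cmod a)"
  have herm: "A$j$i = cnj a"
    using psd unfolding psd_def hermitian_def a_def by blast
  have a_pos: "cmod a > 0"
    using False a_def by simp
  have zz: "cnj z * z = 1"
    using a_pos by (simp add: z_def complex_norm_square[symmetric] power2_eq_square)
  have "a * z = - (a * cnj a) / complex_of_real (cmod a)"
    by (simp add: z_def)
  also have "\<dots> = - complex_of_real ((cmod a)^2) / complex_of_real (cmod a)"
    by (simp only: complex_norm_square)
  also have "\<dots> = - complex_of_real (cmod a)"
    using a_pos by (simp add: power2_eq_square)
  finally have az: "a * z = - complex_of_real (cmod a)" .
  have "0 \<le> Re (\<Sum>k\<in>UNIV. cnj ((axis i 1 + axis j z :: complex^'n) $ k)
                               * (A *v (axis i 1 + axis j z)) $ k)"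
    using psd by (rule psd_quadratic_form_nonneg)
  also have "\<dots> = Re (A$i$i + a * z + cnj (a * z) + A$j$j)"
    unfolding quadratic_form_axis_add_axis[OF \<open>i \<noteq> j\<close>] herm zz
    by (simp add: a_def mult.commute)
  also have "\<dots> = Re (A$i$i) + Re (A$j$j) - 2 * cmod a"
    using az by simp
  finally show ?thesis
    by (simp add: a_def)
qed

lemma psd_entry_le_one:
  fixes A :: "complex^'n^'n"
  assumes psd: "psd A" and diag: "\<And>k. Re (A$k$k) \<le> 1"
  shows "cmod (A$i$j) \<le> 1"
proof (cases "i = j")
  case True
  then show ?thesis
    using psd_diagonal[OF psd, of j] diag[of j] by (simp add: cmod_eq_Re)
next
  case False
  then show ?thesis
    using psd_off_diagonal_le[OF psd False] diag[of i] diag[of j] by linarith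
qed

lemma POVMs_entry_le_one:
  assumes "M \<in> POVMs"
  shows "cmod (M c $ i $ j) \<le> 1"
proof -
  have psd: "psd (M False)" "psd (M True)" and sum: "M False + M True = mat 1"
    using assms unfolding POVMs_def by auto
  have "Re (M c $ k $ k) \<le> 1" for k
  proof -
    have "Re (M False $ k $ k) + Re (M True $ k $ k) = 1"
      using arg_cong[OF sum, of "\<lambda>A. Re (A $ k $ k)"] by (simp add: mat_def)
    then show ?thesis
      using psd_diagonal_Re_nonneg[OF psd(1), of k] psd_diagonal_Re_nonneg[OF psd(2), of k]
      by (cases c) auto
  qed
  moreover have "psd (M c)"
    using psd by (cases c) auto
  ultimately show ?thesis
    using psd_entry_le_one by blast
qed

lemma density_entry_le_one:
  fixes A :: "complex^'n^'n"
  assumes "density A"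
  shows "cmod (A $ i $ j) \<le> 1"
proof -
  have psd: "psd A" and tr: "trace A = 1"
    using assms unfolding density_def by auto
  have "Re (A$k$k) \<le> 1" for k
  proof -
    have "Re (A$k$k) \<le> (\<Sum>l\<in>UNIV. Re (A$l$l))"
      by (rule member_le_sum) (auto simp: psd_diagonal_Re_nonneg[OF psd])
    also have "\<dots> = Re (trace A)"
      by (simp add: trace_def)
    finally show ?thesis
      using tr by simp
  qed
  then show ?thesis
    using psd_entry_le_one[OF psd] by blast
qed

lemma norm_trace_mult_le:
  fixes M R :: "complex^'n^'n"
  assumes "\<And>i j. cmod (M$i$j) \<le> 1" "\<And>i j. cmod (R$i$j) \<le> 1"
  shows "cmod (trace (M ** R)) \<le> real CARD('n)^2"
proof -
  have "cmod (trace (M ** R)) = cmod (\<Sum>i\<in>UNIV. \<Sum>k\<in>UNIV. M$i$k * R$k$i)"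
    by (simp add: trace_def matrix_matrix_mult_def)
  also have "\<dots> \<le> (\<Sum>i\<in>UNIV. \<Sum>k\<in>UNIV. cmod (M$i$k * R$k$i))"
    by (rule order_trans[OF norm_sum sum_mono[OF norm_sum]])
  also have "\<dots> \<le> (\<Sum>i\<in>(UNIV::'n set). \<Sum>k\<in>(UNIV::'n set). 1)"
    by (intro sum_mono) (simp add: norm_mult mult_le_one assms)
  finally show ?thesis
    by (simp add: power2_eq_square)
qed

lemma abs_loss_le:
  fixes \<rho> :: "'p \<Rightarrow> 'x \<Rightarrow> complex^'n^'n"
  assumes "\<forall>x. density (\<rho> \<theta> x)" "M \<in> POVMs"
  shows "\<bar>loss \<rho> \<theta> M z\<bar> \<le> 1 + real CARD('n)^2"
proof -
  have "cmod (trace (M (fst z) ** \<rho> \<theta> (snd z))) \<le> real CARD('n)^2"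
    using assms by (intro norm_trace_mult_le POVMs_entry_le_one density_entry_le_one) auto
  then show ?thesis
    unfolding loss_def using abs_Re_le_cmod[of "trace (M (fst z) ** \<rho> \<theta> (snd z))"] by linarith
qed

lemma abs_risk_le:
  assumes "\<And>z. \<bar>loss \<rho> \<theta> M z\<bar> \<le> B"
  shows "\<bar>risk p \<rho> \<theta> M\<bar> \<le> B"
proof -
  have "\<bar>risk p \<rho> \<theta> M\<bar> \<le> (\<Sum>z\<in>UNIV. pmf p z * \<bar>loss \<rho> \<theta> M z\<bar>)"
    unfolding risk_def by (rule order_trans[OF sum_abs]) (simp add: abs_mult)
  also have "\<dots> \<le> (\<Sum>z\<in>UNIV. pmf p z * B)"
    by (intro sum_mono mult_left_mono assms) simp
  also have "\<dots> = B"
    by (simp add: sum_distrib_right[symmetric] sum_pmf_eq_1)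
  finally show ?thesis .
qed

lemma abs_emp_risk_le:
  assumes "\<And>z. \<bar>loss \<rho> \<theta> M z\<bar> \<le> B" and "0 \<le> B"
  shows "\<bar>emp_risk D \<rho> \<theta> M\<bar> \<le> B"
proof -
  have "\<bar>\<Sum>z\<leftarrow>D. loss \<rho> \<theta> M z\<bar> \<le> (\<Sum>z\<leftarrow>D. \<bar>loss \<rho> \<theta> M z\<bar>)"
    using sum_list_abs[of "map (loss \<rho> \<theta> M) D"] by (simp add: comp_def)
  also have "\<dots> \<le> (\<Sum>z\<leftarrow>D. B)"
    by (rule sum_list_mono) (rule assms(1))
  finally show ?thesis
    using \<open>0 \<le> B\<close> by (cases "D = []") (auto simp: emp_risk_def sum_list_triv divide_simps mult.commute)
qed

lemma psd_zero: "psd (0 :: complex^'n^'n)"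
  by (simp add: psd_def hermitian_def)

lemma psd_mat_one: "psd (mat 1 :: complex^'n^'n)"
proof -
  have "0 \<le> Re (\<Sum>i\<in>UNIV. cnj (v$i) * (mat 1 *v v)$i)" for v :: "complex^'n"
    by (simp add: Re_sum sum_nonneg)
  then show ?thesis
    by (simp add: psd_def hermitian_def mat_def)
qed

lemma POVMs_nonempty: "(POVMs :: (bool \<Rightarrow> complex^'n^'n) set) \<noteq> {}"
proof -
  have "(\<lambda>c. if c then 0 else mat 1) \<in> (POVMs :: (bool \<Rightarrow> complex^'n^'n) set)"
    by (simp add: POVMs_def psd_zero psd_mat_one)
  then show ?thesis
    by blast
qed

lemma cINF_le_cINF_add:
  fixes f g :: "'a \<Rightarrow> real"
  assumes "A \<noteq> {}" "bdd_below (f ` A)" "\<And>x. x \<in> A \<Longrightarrow> f x \<le> g x + e"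
  shows "(INF x\<in>A. f x) \<le> (INF x\<in>A. g x) + e"
proof -
  have "(INF x\<in>A. f x) - e \<le> g x" if "x \<in> A" for x
    using cINF_lower[OF assms(2) that] assms(3)[OF that] by linarith
  then have "(INF x\<in>A. f x) - e \<le> (INF x\<in>A. g x)"
    using assms(1) by (intro cINF_greatest)
  then show ?thesis
    by linarith
qed

context
  fixes \<rho> :: "'p \<Rightarrow> 'x::finite \<Rightarrow> complex^'n::finite^'n" and \<theta> :: 'p
  assumes density: "\<forall>x. density (\<rho> \<theta> x)"
begin

lemma abs_risk_le_loss_bound:
  "M \<in> POVMs \<Longrightarrow> \<bar>risk p \<rho> \<theta> M\<bar> \<le> 1 + real CARD('n)^2"
  by (intro abs_risk_le abs_loss_le density)

lemma abs_emp_risk_le_loss_bound: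
  "M \<in> POVMs \<Longrightarrow> \<bar>emp_risk D \<rho> \<theta> M\<bar> \<le> 1 + real CARD('n)^2"
  by (intro abs_emp_risk_le abs_loss_le density) auto

lemma bdd_below_risk: "bdd_below ((\<lambda>M. risk p \<rho> \<theta> M) ` POVMs)"
proof -
  have "- (1 + real CARD('n)^2) \<le> risk p \<rho> \<theta> M" if "M \<in> POVMs" for M
    using abs_risk_le_loss_bound[OF that, of p] by linarith
  then show ?thesis
    by (rule bdd_belowI2)
qed

lemma bdd_below_emp_risk: "bdd_below ((\<lambda>M. emp_risk D \<rho> \<theta> M) ` POVMs)"
proof -
  have "- (1 + real CARD('n)^2) \<le> emp_risk D \<rho> \<theta> M" if "M \<in> POVMs" for M
    using abs_emp_risk_le_loss_bound[OF that, of D] by linarith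
  then show ?thesis
    by (rule bdd_belowI2)
qed

lemma abs_risk_diff_le_twice_loss_bound:
  assumes "M \<in> POVMs"
  shows "\<bar>risk p \<rho> \<theta> M - emp_risk D \<rho> \<theta> M\<bar> \<le> 2 * (1 + real CARD('n)^2)"
  using abs_triangle_ineq4[of "risk p \<rho> \<theta> M" "emp_risk D \<rho> \<theta> M"]
    abs_risk_le_loss_bound[OF assms, of p] abs_emp_risk_le_loss_bound[OF assms, of D] by (smt (verit))

lemma abs_risk_diff_le_gen_err:
  "M \<in> POVMs \<Longrightarrow> \<bar>risk p \<rho> \<theta> M - emp_risk D \<rho> \<theta> M\<bar> \<le> gen_err p D \<rho> \<theta>"
  unfolding gen_err_def using abs_risk_diff_le_twice_loss_bound
  by (intro cSUP_upper bdd_aboveI2[where M = "2 * (1 + real CARD('n)^2)"])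

lemma gen_err_le_twice_loss_bound: "gen_err p D \<rho> \<theta> \<le> 2 * (1 + real CARD('n)^2)"
  unfolding gen_err_def
  by (intro cSUP_least POVMs_nonempty abs_risk_diff_le_twice_loss_bound)

lemma risk_le_emp_risk_add_gen_err:
  "M \<in> POVMs \<Longrightarrow> risk p \<rho> \<theta> M \<le> emp_risk D \<rho> \<theta> M + gen_err p D \<rho> \<theta>"
  using abs_risk_diff_le_gen_err[of M p D] by (auto simp: abs_le_iff)

lemma emp_risk_le_risk_add_gen_err:
  "M \<in> POVMs \<Longrightarrow> emp_risk D \<rho> \<theta> M \<le> risk p \<rho> \<theta> M + gen_err p D \<rho> \<theta>"
  using abs_risk_diff_le_gen_err[of M p D] by (auto simp: abs_le_iff)

lemma risk_opt_le_INF_emp_risk_add_gen_err: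
  "risk_opt p \<rho> \<theta> \<le> (INF M\<in>POVMs. emp_risk D \<rho> \<theta> M) + gen_err p D \<rho> \<theta>"
  unfolding risk_opt_def
  by (intro cINF_le_cINF_add POVMs_nonempty bdd_below_risk risk_le_emp_risk_add_gen_err)

lemma INF_emp_risk_le_risk_opt_add_gen_err:
  "(INF M\<in>POVMs. emp_risk D \<rho> \<theta> M) \<le> risk_opt p \<rho> \<theta> + gen_err p D \<rho> \<theta>"
  unfolding risk_opt_def
  by (intro cINF_le_cINF_add POVMs_nonempty bdd_below_emp_risk emp_risk_le_risk_add_gen_err)

lemma risk_emp_risk_minimiser_le:
  assumes "M' \<in> POVMs" "\<forall>M\<in>POVMs. emp_risk D \<rho> \<theta> M' \<le> emp_risk D \<rho> \<theta> M"
  shows "risk p \<rho> \<theta> M' \<le> risk_opt p \<rho> \<theta> + 2 * gen_err p D \<rho> \<theta>"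
proof -
  have "risk p \<rho> \<theta> M' - 2 * gen_err p D \<rho> \<theta> \<le> risk p \<rho> \<theta> M" if "M \<in> POVMs" for M
    using risk_le_emp_risk_add_gen_err[OF assms(1), of p D]
      emp_risk_le_risk_add_gen_err[OF that, of D p] assms(2) that by fastforce
  then have "risk p \<rho> \<theta> M' - 2 * gen_err p D \<rho> \<theta> \<le> risk_opt p \<rho> \<theta>"
    unfolding risk_opt_def by (intro cINF_greatest POVMs_nonempty)
  then show ?thesis
    by linarith
qed

end

lemma gen_err_le_SUP_gen_err:
  fixes \<rho> :: "'p \<Rightarrow> 'x::finite \<Rightarrow> complex^'n::finite^'n"
  assumes "\<forall>\<theta>\<in>\<Theta>. \<forall>x. density (\<rho> \<theta> x)" "\<theta> \<in> \<Theta>"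
  shows "gen_err p D \<rho> \<theta> \<le> (SUP \<theta>\<in>\<Theta>. gen_err p D \<rho> \<theta>)"
proof -
  have "gen_err p D \<rho> \<theta>' \<le> 2 * (1 + real CARD('n)^2)" if "\<theta>' \<in> \<Theta>" for \<theta>'
    using assms(1) that by (intro gen_err_le_twice_loss_bound[of \<rho> \<theta>']) auto
  then show ?thesis
    by (intro cSUP_upper[OF assms(2)] bdd_aboveI2)
qed

lemma task_dist_le_gen_err_add_gen_err:
  fixes \<rho> :: "'p \<Rightarrow> 'x::finite \<Rightarrow> complex^'n::finite^'n"
  assumes "\<forall>x. density (\<rho> \<theta> x)" "\<forall>x. density (\<rho> \<theta>' x)"
    and "risk_opt p \<rho> \<theta>' \<le> risk_opt p \<rho> \<theta>"
    and "(INF M\<in>POVMs. emp_risk D \<rho> \<theta> M) \<le> (INF M\<in>POVMs. emp_risk D \<rho> \<theta>' M)"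
  shows "task_dist p \<rho> \<theta> \<theta>' \<le> gen_err p D \<rho> \<theta> + gen_err p D \<rho> \<theta>'"
  using assms risk_opt_le_INF_emp_risk_add_gen_err[of \<rho> \<theta> p D, OF assms(1)]
    INF_emp_risk_le_risk_opt_add_gen_err[of \<rho> \<theta>' D p, OF assms(2)]
  unfolding task_dist_def by linarith

theorem lemmaB1:
  fixes \<Theta> :: "'p set"
    and \<rho> :: "'p \<Rightarrow> 'x::finite \<Rightarrow> complex^'n::finite^'n"
    and pS pT :: "(bool \<times> 'x) pmf"
    and DS DT :: "(bool \<times> 'x) list"
    and thS thT th_hat :: 'p
    and MT_hat :: "bool \<Rightarrow> complex^'n^'n"
    and D_ST :: real
  assumes rho: "\<forall>\<theta>\<in>\<Theta>. \<forall>x. density (\<rho> \<theta> x)"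
    and thS: "thS \<in> \<Theta>" "\<forall>\<theta>\<in>\<Theta>. risk_opt pS \<rho> thS \<le> risk_opt pS \<rho> \<theta>"
    and thT: "thT \<in> \<Theta>" "\<forall>\<theta>\<in>\<Theta>. risk_opt pT \<rho> thT \<le> risk_opt pT \<rho> \<theta>"
    and th_hat: "th_hat \<in> \<Theta>"
      "\<forall>\<theta>\<in>\<Theta>. (INF M\<in>POVMs. emp_risk DS \<rho> th_hat M) \<le> (INF M\<in>POVMs. emp_risk DS \<rho> \<theta> M)"
    and MT_hat: "MT_hat \<in> POVMs" "\<forall>M\<in>POVMs. emp_risk DT \<rho> th_hat MT_hat \<le> emp_risk DT \<rho> th_hat M"
  shows
    "(((\<exists>a\<in>\<Theta>. \<exists>b\<in>\<Theta>. a \<noteq> b) \<and>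
      (\<forall>\<theta>\<in>\<Theta>. task_dist pT \<rho> \<theta> thT \<le> task_dist pS \<rho> \<theta> thS + D_ST)) \<longrightarrow>
       risk pT \<rho> th_hat MT_hat - (INF \<theta>\<in>\<Theta>. risk_opt pT \<rho> \<theta>)
         \<le> 2 * gen_err pT DT \<rho> th_hat + task_dist pS \<rho> th_hat thS + D_ST
     \<and> 2 * gen_err pT DT \<rho> th_hat + task_dist pS \<rho> th_hat thS + D_ST
         \<le> 2 * gen_err pT DT \<rho> th_hat + (SUP \<theta>\<in>\<Theta>. gen_err pS DS \<rho> \<theta>)
             + gen_err pS DS \<rho> thS + D_ST)
     \<and> (\<forall>\<theta>. \<Theta> = {\<theta>} \<longrightarrow>
       risk pT \<rho> th_hat MT_hat - (INF \<theta>'\<in>\<Theta>. risk_opt pT \<rho> \<theta>') \<le> 2 * gen_err pT DT \<rho> \<theta>)"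
proof -
  have density_hat: "\<forall>x. density (\<rho> th_hat x)" and density_S: "\<forall>x. density (\<rho> thS x)"
    using rho th_hat(1) thS(1) by auto
  have INF_target: "(INF \<theta>\<in>\<Theta>. risk_opt pT \<rho> \<theta>) = risk_opt pT \<rho> thT"
    using thT by (intro cInf_eq_minimum) auto
  have excess: "risk pT \<rho> th_hat MT_hat - (INF \<theta>\<in>\<Theta>. risk_opt pT \<rho> \<theta>)
      \<le> 2 * gen_err pT DT \<rho> th_hat + (risk_opt pT \<rho> th_hat - risk_opt pT \<rho> thT)"
    using risk_emp_risk_minimiser_le[of \<rho> th_hat, OF density_hat MT_hat, of pT] INF_target by linarith
  have transfer: "risk_opt pT \<rho> th_hat - risk_opt pT \<rho> thT \<le> task_dist pS \<rho> th_hat thS + D_ST"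
    if "\<forall>\<theta>\<in>\<Theta>. task_dist pT \<rho> \<theta> thT \<le> task_dist pS \<rho> \<theta> thS + D_ST"
    using that th_hat(1) unfolding task_dist_def by fastforce
  have source: "task_dist pS \<rho> th_hat thS \<le> gen_err pS DS \<rho> th_hat + gen_err pS DS \<rho> thS"
    using thS th_hat density_hat density_S by (intro task_dist_le_gen_err_add_gen_err) auto
  have SUP_source: "gen_err pS DS \<rho> th_hat \<le> (SUP \<theta>\<in>\<Theta>. gen_err pS DS \<rho> \<theta>)"
    using rho th_hat(1) by (rule gen_err_le_SUP_gen_err)
  have singleton: "th_hat = \<theta> \<and> thT = \<theta>" if "\<Theta> = {\<theta>}" for \<theta>
    using that th_hat(1) thT(1) by auto
  show ?thesis
    using excess source SUP_source
    by (intro conjI impI allI) (use transfer in fastforce, linarith, use singleton in fastforce)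
qed

end
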